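(* Let $n\ge1$, $m\ge0$, let $z\in Z_{n,m}$ with $z_i=0$ for some $1\leq i\leq m$, and let $P=(z=x^0\sim x^1\sim\dots\sim x^d=0)$ be a geodesic in $Z_{n,m}$ between $z$ and $0$. Then, for either choice of sign, there exists a geodesic $P'=(z=y^0\sim y^1\sim\dots\sim y^d=0)$ such that (1) $y^t_i\leq0$ for all $0\leq t\leq d$ (respectively, $y^t_i\geq0$ for all $0\le t\le d$), and (2) $\{y^t_j:0\leq t\leq d\}=\{x^t_j:0\leq t\leq d\}$ for every $0\leq j\leq m+1$ with $j\neq i$.
   Context: Elements of $\mathbb{Z}_n$ are identified with representatives in $\{0,\dots,n-1\}$. The dYoke graph $Z_{n,m}$ has vertices $u=(u_0,\dots,u_{m+1})\in\mathbb{Z}_n\times\{-1,0,1\}^m\times\mathbb{Z}_n$ with $\sum_{i=0}^{m+1}u_i\equiv0\pmod n$; $u,v$ are adjacent if there is $0\leq i\leq m$ such that $u_j=v_j$ for $j\notin\{i,i+1\}$ and either ($u_i=v_i+1$, $u_{i+1}=v_{i+1}-1$) or ($u_i=v_i-1$, $u_{i+1}=v_{i+1}+1$), with arithmetic in coordinates $0,m+1$ in $\mathbb{Z}_n$. $0$ is the all-zero vertex. *)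

theory Defs
  imports Main
begin

text \<open>Vertices of the dYoke graph Z_{n,m} are int lists of length m+2; coordinates
  0 and m+1 are representatives in {0..n-1} of Z_n, the middle coordinates lie in {-1,0,1}.\<close>

definition dyoke_vert :: "nat \<Rightarrow> nat \<Rightarrow> int list \<Rightarrow> bool" where
  "dyoke_vert n m u \<longleftrightarrow> length u = m + 2
     \<and> 0 \<le> u ! 0 \<and> u ! 0 < int n
     \<and> 0 \<le> u ! (m+1) \<and> u ! (m+1) < int n
     \<and> (\<forall>j\<in>{1..m}. u ! j \<in> {-1, 0, 1})
     \<and> sum_list u mod int n = 0"

definition dyoke_coord_step :: "nat \<Rightarrow> nat \<Rightarrow> nat \<Rightarrow> int list \<Rightarrow> int list \<Rightarrow> int \<Rightarrow> bool" where
  "dyoke_coord_step n m j u v s \<longleftrightarrow>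
     (if j = 0 \<or> j = m + 1 then (u ! j - (v ! j + s)) mod int n = 0
      else u ! j = v ! j + s)"

definition dyoke_adj :: "nat \<Rightarrow> nat \<Rightarrow> int list \<Rightarrow> int list \<Rightarrow> bool" where
  "dyoke_adj n m u v \<longleftrightarrow> dyoke_vert n m u \<and> dyoke_vert n m v \<and>
     (\<exists>i\<le>m. (\<forall>j<m+2. j \<noteq> i \<and> j \<noteq> i + 1 \<longrightarrow> u ! j = v ! j)
        \<and> ((dyoke_coord_step n m i u v 1 \<and> dyoke_coord_step n m (i+1) u v (-1))
          \<or> (dyoke_coord_step n m i u v (-1) \<and> dyoke_coord_step n m (i+1) u v 1)))"

definition dyoke_zero :: "nat \<Rightarrow> int list" where
  "dyoke_zero m = replicate (m + 2) 0"

definition dyoke_walk :: "nat \<Rightarrow> nat \<Rightarrow> (nat \<Rightarrow> int list) \<Rightarrow> nat \<Rightarrow> bool" where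
  "dyoke_walk n m x d \<longleftrightarrow> (\<forall>t\<le>d. dyoke_vert n m (x t)) \<and>
     (\<forall>t<d. dyoke_adj n m (x t) (x (Suc t)))"

definition dyoke_geodesic :: "nat \<Rightarrow> nat \<Rightarrow> (nat \<Rightarrow> int list) \<Rightarrow> nat \<Rightarrow> int list \<Rightarrow> int list \<Rightarrow> bool" where
  "dyoke_geodesic n m x d a b \<longleftrightarrow> dyoke_walk n m x d \<and> x 0 = a \<and> x d = b \<and>
     (\<forall>y d'. dyoke_walk n m y d' \<and> y 0 = a \<and> y d' = b \<longrightarrow> d \<le> d')"

end

theory Submission
  imports Defs
begin

(* Along a geodesic, two moves on the same edge always have the same sign: a pair with opposite
   signs could be cancelled, giving a shorter walk between the same endpoints. Now suppose coordinate
   i equals c = 1 or c = -1 somewhere, and take a maximal run of times at which it equals c. The run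
   is opened by a move on one edge at i and closed by a move on the other edge at i. The first later
   move lying entirely beyond i on the side of the closing edge (or the closing move itself)
   commutes with all moves since the opening one, so it can be moved to just before it; this keeps the
   walk a geodesic, keeps the sets of values of all other coordinates, and strictly decreases the
   number of times at which coordinate i equals c. Iterating gives a geodesic avoiding c. *)

(* Walks are lifted to integer vectors whose two end coordinates are not reduced modulo n;
   dyoke_of reduces them. *)

definition coord_reduce :: "nat \<Rightarrow> nat \<Rightarrow> nat \<Rightarrow> int \<Rightarrow> int" where
  "coord_reduce n m j a = (if j = 0 \<or> j = m + 1 then a mod int n else a)"

definition dyoke_of :: "nat \<Rightarrow> nat \<Rightarrow> (nat \<Rightarrow> int) \<Rightarrow> int list" where
  "dyoke_of n m f = map (\<lambda>j. coord_reduce n m j (f j)) [0..<m+2]"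

definition move_vec :: "nat \<times> int \<Rightarrow> nat \<Rightarrow> int" where
  "move_vec mv j = (if j = fst mv then - snd mv else if j = Suc (fst mv) then snd mv else 0)"

definition valid_move :: "nat \<Rightarrow> nat \<times> int \<Rightarrow> bool" where
  "valid_move m mv \<longleftrightarrow> fst mv \<le> m \<and> (snd mv = 1 \<or> snd mv = -1)"

definition lifted_walk :: "nat \<Rightarrow> (nat \<Rightarrow> nat \<Rightarrow> int) \<Rightarrow> (nat \<Rightarrow> nat \<times> int) \<Rightarrow> nat \<Rightarrow> bool" where
  "lifted_walk m H l d \<longleftrightarrow>
     (\<forall>t<d. valid_move m (l t) \<and> (\<forall>j. H (Suc t) j = H t j + move_vec (l t) j))"

definition lift_in_range :: "nat \<Rightarrow> (nat \<Rightarrow> nat \<Rightarrow> int) \<Rightarrow> nat \<Rightarrow> bool" where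
  "lift_in_range m H d \<longleftrightarrow> (\<forall>t\<le>d. \<forall>j. 1 \<le> j \<and> j \<le> m \<longrightarrow> H t j \<in> {-1, 0, 1})"

lemma lift_in_rangeD:
  "lift_in_range m H d \<Longrightarrow> t \<le> d \<Longrightarrow> 1 \<le> j \<Longrightarrow> j \<le> m \<Longrightarrow> H t j \<in> {-1, 0, 1}"
  by (simp add: lift_in_range_def)

lemma lifted_walkD:
  assumes "lifted_walk m H l d" "t < d"
  shows "valid_move m (l t)" "H (Suc t) j = H t j + move_vec (l t) j"
  using assms by (simp_all add: lifted_walk_def)

lemma lifted_walk_SucD:
  "lifted_walk m H l d \<Longrightarrow> t < d \<Longrightarrow> H (Suc t) = (\<lambda>j. H t j + move_vec (l t) j)"
  by (simp add: lifted_walk_def fun_eq_iff)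

lemma length_dyoke_of [simp]: "length (dyoke_of n m f) = m + 2"
  by (simp add: dyoke_of_def)

lemma nth_dyoke_of: "j < m + 2 \<Longrightarrow> dyoke_of n m f ! j = coord_reduce n m j (f j)"
  unfolding dyoke_of_def by (subst nth_map_upt) auto

lemma nth_dyoke_of_middle: "1 \<le> j \<Longrightarrow> j \<le> m \<Longrightarrow> dyoke_of n m f ! j = f j"
  by (simp add: nth_dyoke_of coord_reduce_def)

lemma sum_list_dyoke_of_mod:
  "sum_list (dyoke_of n m f) mod int n = (\<Sum>j<m+2. f j) mod int n"
proof -
  have "sum_list (dyoke_of n m f) = (\<Sum>j<m+2. coord_reduce n m j (f j))"
    by (simp add: dyoke_of_def sum_set_upt_conv_sum_list_nat[symmetric] atLeast0LessThan)
  also have "\<dots> mod int n = (\<Sum>j<m+2. coord_reduce n m j (f j) mod int n) mod int n"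
    by (rule mod_sum_eq[symmetric])
  also have "(\<Sum>j<m+2. coord_reduce n m j (f j) mod int n) = (\<Sum>j<m+2. f j mod int n)"
    by (rule sum.cong) (auto simp: coord_reduce_def)
  also have "(\<Sum>j<m+2. f j mod int n) mod int n = (\<Sum>j<m+2. f j) mod int n"
    by (rule mod_sum_eq)
  finally show ?thesis .
qed

lemma dyoke_vert_dyoke_of_iff:
  assumes "n \<ge> 1"
  shows "dyoke_vert n m (dyoke_of n m f) \<longleftrightarrow>
     (\<forall>j. 1 \<le> j \<and> j \<le> m \<longrightarrow> f j \<in> {-1, 0, 1}) \<and> (\<Sum>j<m+2. f j) mod int n = 0"
  using assms unfolding dyoke_vert_def sum_list_dyoke_of_mod
  by (auto simp: nth_dyoke_of nth_dyoke_of_middle coord_reduce_def)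

lemma dyoke_of_nth_self:
  assumes "dyoke_vert n m u"
  shows "dyoke_of n m (\<lambda>j. u ! j) = u"
  using assms by (intro nth_equalityI) (auto simp: nth_dyoke_of coord_reduce_def dyoke_vert_def)

lemma sum_move_vec: "fst mv \<le> m \<Longrightarrow> (\<Sum>j<m+2. move_vec mv j) = 0"
  by (simp add: move_vec_def sum.If_cases)

lemma move_vec_eq_0_iff:
  "valid_move m mv \<Longrightarrow> move_vec mv j = 0 \<longleftrightarrow> j \<noteq> fst mv \<and> j \<noteq> Suc (fst mv)"
  by (auto simp: move_vec_def valid_move_def)

lemma move_vec_range: "valid_move m mv \<Longrightarrow> move_vec mv j \<in> {-1, 0, 1}"
  by (auto simp: move_vec_def valid_move_def)

lemma dyoke_coord_step_iff:
  assumes "dyoke_vert n m v" "j < m + 2"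
  shows "dyoke_coord_step n m j u v s \<longleftrightarrow> v ! j = coord_reduce n m j (u ! j - s)"
proof (cases "j = 0 \<or> j = m + 1")
  case True
  then have "0 \<le> v ! j" "v ! j < int n" using assms(1) by (auto simp: dyoke_vert_def)
  then have "v ! j = v ! j mod int n" by simp
  then have "(u ! j - (v ! j + s)) mod int n = 0 \<longleftrightarrow> v ! j = (u ! j - s) mod int n"
    by (metis diff_diff_eq2 diff_add_eq_diff_diff_swap dvd_eq_mod_eq_0 mod_eq_dvd_iff)
  with True show ?thesis by (simp add: dyoke_coord_step_def coord_reduce_def)
qed (auto simp: dyoke_coord_step_def coord_reduce_def)

lemma dyoke_of_move_iff:
  assumes "dyoke_vert n m u" "dyoke_vert n m v" "k \<le> m"
  shows "v = dyoke_of n m (\<lambda>j. u ! j + move_vec (k, s) j) \<longleftrightarrow>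
    (\<forall>j<m+2. j \<noteq> k \<and> j \<noteq> k + 1 \<longrightarrow> u ! j = v ! j)
    \<and> dyoke_coord_step n m k u v s \<and> dyoke_coord_step n m (k + 1) u v (- s)"
proof -
  define P where "P j \<longleftrightarrow> v ! j = coord_reduce n m j (u ! j + move_vec (k, s) j)" for j
  have "v = dyoke_of n m (\<lambda>j. u ! j + move_vec (k, s) j) \<longleftrightarrow> (\<forall>j<m+2. P j)"
    using assms(2) by (auto simp: list_eq_iff_nth_eq nth_dyoke_of dyoke_vert_def P_def)
  also have "\<dots> \<longleftrightarrow> (\<forall>j<m+2. j \<noteq> k \<and> j \<noteq> k + 1 \<longrightarrow> P j) \<and> P k \<and> P (k + 1)"
    by (rule iffI) (use assms(3) in simp, blast)
  also have "(\<forall>j<m+2. j \<noteq> k \<and> j \<noteq> k + 1 \<longrightarrow> P j)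
      \<longleftrightarrow> (\<forall>j<m+2. j \<noteq> k \<and> j \<noteq> k + 1 \<longrightarrow> u ! j = v ! j)"
  proof -
    have "coord_reduce n m j (u ! j) = u ! j" for j
      using assms(1) by (auto simp: coord_reduce_def dyoke_vert_def)
    then show ?thesis by (simp add: P_def move_vec_def eq_commute)
  qed
  also have "P k \<longleftrightarrow> dyoke_coord_step n m k u v s"
    using assms by (simp add: P_def dyoke_coord_step_iff move_vec_def)
  also have "P (k + 1) \<longleftrightarrow> dyoke_coord_step n m (k + 1) u v (- s)"
    using assms by (simp add: P_def dyoke_coord_step_iff move_vec_def)
  finally show ?thesis .
qed

lemma dyoke_adj_iff_move:
  "dyoke_adj n m u v \<longleftrightarrow> dyoke_vert n m u \<and> dyoke_vert n m v \<and>
     (\<exists>mv. valid_move m mv \<and> v = dyoke_of n m (\<lambda>j. u ! j + move_vec mv j))"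
proof (cases "dyoke_vert n m u \<and> dyoke_vert n m v")
  case True
  have "(\<exists>mv. valid_move m mv \<and> v = dyoke_of n m (\<lambda>j. u ! j + move_vec mv j)) \<longleftrightarrow>
      (\<exists>k\<le>m. v = dyoke_of n m (\<lambda>j. u ! j + move_vec (k, 1) j)
           \<or> v = dyoke_of n m (\<lambda>j. u ! j + move_vec (k, -1) j))"
    unfolding valid_move_def split_paired_Ex by auto
  also have "\<dots> \<longleftrightarrow> dyoke_adj n m u v"
    unfolding dyoke_adj_def using True dyoke_of_move_iff[of n m u v _ 1] dyoke_of_move_iff[of n m u v _ "-1"]
    by auto
  finally show ?thesis using True by blast
qed (auto simp: dyoke_adj_def)

lemma sum_lifted_walk:
  assumes "lifted_walk m H l d" "t \<le> d"
  shows "(\<Sum>j<m+2. H t j) = (\<Sum>j<m+2. H 0 j)"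
  using assms(2)
proof (induction t)
  case (Suc t)
  then show ?case
    using lifted_walkD[OF assms(1)] sum_move_vec[of "l t" m] by (simp add: sum.distrib valid_move_def)
qed simp

lemma dyoke_of_cong:
  "(\<And>j. j < m + 2 \<Longrightarrow> coord_reduce n m j (f j) = coord_reduce n m j (g j)) \<Longrightarrow>
    dyoke_of n m f = dyoke_of n m g"
  by (simp add: dyoke_of_def)

lemma dyoke_of_add_reduced:
  "dyoke_of n m (\<lambda>j. dyoke_of n m f ! j + g j) = dyoke_of n m (\<lambda>j. f j + g j)"
  by (rule dyoke_of_cong) (simp add: nth_dyoke_of coord_reduce_def mod_add_left_eq)

lemma dyoke_walk_of_lift:
  assumes "n \<ge> 1" "lifted_walk m H l d" "lift_in_range m H d"
    and "(\<Sum>j<m+2. H 0 j) mod int n = 0"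
  shows "dyoke_walk n m (\<lambda>t. dyoke_of n m (H t)) d"
proof -
  have vert: "dyoke_vert n m (dyoke_of n m (H t))" if "t \<le> d" for t
    using assms that sum_lifted_walk[OF assms(2) that]
    by (simp add: dyoke_vert_dyoke_of_iff lift_in_range_def)
  have "dyoke_adj n m (dyoke_of n m (H t)) (dyoke_of n m (H (Suc t)))" if "t < d" for t
  proof -
    have "dyoke_of n m (H (Suc t)) = dyoke_of n m (\<lambda>j. dyoke_of n m (H t) ! j + move_vec (l t) j)"
      using assms(2) that by (simp add: dyoke_of_add_reduced lifted_walk_SucD)
    moreover have "valid_move m (l t)" using lifted_walkD(1)[OF assms(2) that] .
    moreover have "t \<le> d" "Suc t \<le> d" using that by simp_all
    ultimately show ?thesis
      unfolding dyoke_adj_iff_move using vert by blast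
  qed
  then show ?thesis using vert by (simp add: dyoke_walk_def)
qed

lemma lift_of_dyoke_walk:
  assumes "dyoke_walk n m x d"
  obtains H l where "lifted_walk m H l d" "\<And>t. t \<le> d \<Longrightarrow> x t = dyoke_of n m (H t)"
    "H 0 = (\<lambda>j. x 0 ! j)"
proof -
  have "\<forall>t. \<exists>mv. t < d \<longrightarrow>
      valid_move m mv \<and> x (Suc t) = dyoke_of n m (\<lambda>j. x t ! j + move_vec mv j)"
    using assms by (auto simp: dyoke_walk_def dyoke_adj_iff_move)
  then obtain l where l: "\<And>t. t < d \<Longrightarrow>
      valid_move m (l t) \<and> x (Suc t) = dyoke_of n m (\<lambda>j. x t ! j + move_vec (l t) j)"
    by metis
  define H where "H t j = x 0 ! j + (\<Sum>q<t. move_vec (l q) j)" for t j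
  have lift: "lifted_walk m H l d"
    using l by (simp add: lifted_walk_def H_def)
  have x_eq: "x t = dyoke_of n m (H t)" if "t \<le> d" for t
    using that
  proof (induction t)
    case 0
    then show ?case using assms by (simp add: H_def dyoke_of_nth_self dyoke_walk_def)
  next
    case (Suc t)
    then have "x (Suc t) = dyoke_of n m (\<lambda>j. dyoke_of n m (H t) ! j + move_vec (l t) j)"
      using l by simp
    also have "\<dots> = dyoke_of n m (H (Suc t))"
      using lift Suc.prems by (simp add: dyoke_of_add_reduced lifted_walk_SucD)
    finally show ?case .
  qed
  show ?thesis by (rule that[OF lift x_eq]) (simp_all add: H_def fun_eq_iff)
qed

lemma nth_dyoke_of_values:
  assumes "j < m + 2"
  shows "{dyoke_of n m (H t) ! j | t. t \<le> d} = coord_reduce n m j ` {H t j | t. t \<le> d}"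
  using assms by (auto simp: nth_dyoke_of)

lemma lifted_walk_coord_const:
  assumes "lifted_walk m H l d" "a \<le> b" "b \<le> d"
    and "\<And>q. a \<le> q \<Longrightarrow> q < b \<Longrightarrow> move_vec (l q) j = 0"
  shows "H b j = H a j"
  using assms(2,3,4)
proof (induction rule: dec_induct)
  case (step q)
  then show ?case using assms(1) by (simp add: lifted_walk_SucD)
qed simp

lemma int_seq_obtain_increase:
  fixes f :: "nat \<Rightarrow> int"
  assumes "f u < f v" "u \<le> v"
  obtains q where "u \<le> q" "q < v" "f q < f (Suc q)"
proof -
  have "\<exists>q. u \<le> q \<and> q < v \<and> f q < f (Suc q)"
  proof (rule ccontr)
    assume no_increase: "\<nexists>q. u \<le> q \<and> q < v \<and> f q < f (Suc q)"
    have "f q \<le> f u" if "u \<le> q" "q \<le> v" for q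
      using that
    proof (induction rule: dec_induct)
      case (step k)
      then have "f (Suc k) \<le> f k" using no_increase by (meson Suc_le_lessD not_less)
      with step show ?case by simp
    qed simp
    then show False using assms by fastforce
  qed
  then show ?thesis using that by blast
qed

lemma lifted_walk_shift_in_range:
  assumes lift: "lifted_walk m H l d" and range: "lift_in_range m H d"
    and t: "a \<le> t" "t < b" and bd: "b < d"
    and opposite: "\<And>j. move_vec (l b) j = - move_vec (l a) j"
    and avoid: "\<And>q. a < q \<Longrightarrow> q < b \<Longrightarrow> fst (l q) \<noteq> fst (l a)"
    and consistent: "\<And>q q'. a < q \<Longrightarrow> q < q' \<Longrightarrow> q' < b \<Longrightarrow> fst (l q) = fst (l q') \<Longrightarrow>
      snd (l q) = snd (l q')"
    and j: "1 \<le> j" "j \<le> m"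
  shows "H (Suc t) j - move_vec (l a) j \<in> {-1, 0, 1}"
proof (rule ccontr)
  \<comment> \<open>Otherwise coordinate j is pushed up and back down strictly between a and b, by moves on
    the same edge with opposite signs.\<close>
  assume out: "H (Suc t) j - move_vec (l a) j \<notin> {-1, 0, 1}"
  note valid = lifted_walkD(1)[OF lift] and step = lifted_walkD(2)[OF lift]
  have in_range: "H q j \<in> {-1, 0, 1}" if "q \<le> d" for q
    using range that j by (simp add: lift_in_range_def)
  define \<tau> where "\<tau> = - move_vec (l a) j"
  have \<tau>: "\<tau> = 1 \<or> \<tau> = -1"
    using out in_range[of "Suc t"] move_vec_range[of m "l a" j] valid[of a] t bd by (auto simp: \<tau>_def)
  define g where "g q = \<tau> * H q j" for q
  have g_step: "g (Suc q) - g q = \<tau> * move_vec (l q) j" if "q < d" for q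
    using step[OF that] by (simp add: g_def algebra_simps)
  have g_a: "g (Suc a) \<le> 0"
    using g_step[of a] in_range[of a] \<tau> t bd by (auto simp: g_def \<tau>_def)
  have g_t: "g (Suc t) = 1"
    using out in_range[of "Suc t"] \<tau> t bd by (auto simp: g_def \<tau>_def)
  have g_b: "g b \<le> 0"
    using g_step[of b] in_range[of "Suc b"] \<tau> bd opposite[of j] by (auto simp: g_def \<tau>_def)
  obtain q1 where q1: "Suc a \<le> q1" "q1 < Suc t" "g q1 < g (Suc q1)"
    by (rule int_seq_obtain_increase[of g "Suc a" "Suc t"]) (use g_a g_t t in auto)
  obtain q2 where q2: "Suc t \<le> q2" "q2 < b" "g (Suc q2) < g q2"
    by (rule int_seq_obtain_increase[of "\<lambda>q. - g q" "Suc t" b]) (use g_b g_t t in auto)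
  have up: "\<tau> * move_vec (l q1) j > 0" and down: "\<tau> * move_vec (l q2) j < 0"
    using g_step[of q1] g_step[of q2] q1 q2 bd by auto
  have touches: "j = fst (l q) \<or> j = Suc (fst (l q))" if "move_vec (l q) j \<noteq> 0" "q < d" for q
    using move_vec_eq_0_iff[OF valid[OF that(2)]] that(1) by blast
  have "move_vec (l q1) j \<noteq> 0" "move_vec (l q2) j \<noteq> 0"
    using up down by auto
  then have "j = fst (l q1) \<or> j = Suc (fst (l q1))" "j = fst (l q2) \<or> j = Suc (fst (l q2))"
    using touches[of q1] touches[of q2] q1 q2 bd by simp_all
  moreover have "j = fst (l a) \<or> j = Suc (fst (l a))"
    using touches[of a] \<tau> t bd by (auto simp: \<tau>_def)
  moreover have "fst (l q1) \<noteq> fst (l a)" "fst (l q2) \<noteq> fst (l a)"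
    using avoid q1 q2 by auto
  ultimately have "fst (l q1) = fst (l q2)" by auto
  with consistent[of q1 q2] q1 q2 have "l q1 = l q2" by (simp add: prod_eq_iff)
  with up down show False by simp
qed

lemma lifted_walk_cancel_pair:
  assumes lift: "lifted_walk m H l d" and ab: "a < b" "b < d"
    and opposite: "\<And>j. move_vec (l b) j = - move_vec (l a) j"
  defines "H' \<equiv> \<lambda>t. if t < a then H t
      else if t < b then (\<lambda>j. H (Suc t) j - move_vec (l a) j) else H (t + 2)"
    and "l' \<equiv> \<lambda>t. if t < a then l t else if Suc t < b then l (Suc t) else l (t + 2)"
  shows "lifted_walk m H' l' (d - 2)" "H' 0 = H 0" "H' (d - 2) = H d"
proof -
  note valid = lifted_walkD(1)[OF lift] and step = lifted_walkD(2)[OF lift]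
  have H'_before_b: "H' t = H (Suc b)" if "Suc t = b" for t
    using that ab step[of b] opposite by (auto simp: H'_def fun_eq_iff)
  have "valid_move m (l' t) \<and> (\<forall>j. H' (Suc t) j = H' t j + move_vec (l' t) j)" if "t < d - 2" for t
  proof -
    consider "Suc t < a" | "Suc t = a" | "a \<le> t" "Suc t < b" | "Suc t = b" | "b \<le> t"
      using ab by linarith
    then show ?thesis
    proof cases
      case 3
      then show ?thesis using that valid[of "Suc t"] step[of "Suc t"] by (auto simp: H'_def l'_def)
    next
      case 4
      then have "H' t = H (Suc b)" by (rule H'_before_b)
      moreover have "H' (Suc t) = H (Suc (Suc b))" "l' t = l (Suc b)"
        using 4 ab by (simp_all add: H'_def l'_def)
      ultimately show ?thesis using 4 that valid[of "Suc b"] step[of "Suc b"] by simp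
    qed (use that ab valid step in \<open>auto simp: H'_def l'_def\<close>)
  qed
  then show "lifted_walk m H' l' (d - 2)" by (simp add: lifted_walk_def)
  show "H' 0 = H 0" using ab step[of 0] by (auto simp: H'_def fun_eq_iff)
  show "H' (d - 2) = H d"
  proof (cases "Suc (d - 2) = b")
    case True
    moreover have "d = Suc b" using True ab by linarith
    ultimately show ?thesis using H'_before_b by simp
  next
    case False
    then have "\<not> d - 2 < a" "\<not> d - 2 < b" "Suc (Suc (d - 2)) = d" using ab by linarith+
    then show ?thesis by (simp add: H'_def)
  qed
qed

lemma lifted_walk_move_earlier:
  assumes lift: "lifted_walk m H l d" and sp: "s < p" "p < d"
  defines "H' \<equiv> \<lambda>t. if s < t \<and> t \<le> p then (\<lambda>j. H (t - 1) j + move_vec (l p) j) else H t"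
    and "l' \<equiv> \<lambda>t. if t = s then l p else if s < t \<and> t \<le> p then l (t - 1) else l t"
  shows "lifted_walk m H' l' d" "H' 0 = H 0" "H' d = H d"
proof -
  note valid = lifted_walkD(1)[OF lift] and step = lifted_walkD(2)[OF lift]
  have "valid_move m (l' t) \<and> (\<forall>j. H' (Suc t) j = H' t j + move_vec (l' t) j)" if "t < d" for t
  proof -
    consider "t < s" | "t = s" | "s < t" "t < p" | "t = p" | "p < t" by linarith
    then show ?thesis
    proof cases
      case 3
      then have "H t j = H (t - 1) j + move_vec (l (t - 1)) j" for j
        using step[of "t - 1"] sp by simp
      then show ?thesis using 3 sp valid[of "t - 1"] by (auto simp: H'_def l'_def)
    next
      case 4
      then have "H (Suc p) j = H (p - 1) j + move_vec (l (p - 1)) j + move_vec (l p) j" for j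
        using step[of p] step[of "p - 1"] sp by simp
      then show ?thesis using 4 sp valid[of "p - 1"] by (auto simp: H'_def l'_def)
    qed (use that sp valid step in \<open>auto simp: H'_def l'_def\<close>)
  qed
  then show "lifted_walk m H' l' d" by (simp add: lifted_walk_def)
  show "H' 0 = H 0" "H' d = H d" using sp by (auto simp: H'_def)
qed

lemma lifted_walk_move_earlier_values:
  assumes lift: "lifted_walk m H l d" and sp: "s < p" "p < d"
    and commute: "\<And>q. s \<le> q \<Longrightarrow> q < p \<Longrightarrow> move_vec (l q) j = 0 \<or> move_vec (l p) j = 0"
  defines "H' \<equiv> \<lambda>t. if s < t \<and> t \<le> p then (\<lambda>j. H (t - 1) j + move_vec (l p) j) else H t"
  shows "{H' t j | t. t \<le> d} = {H t j | t. t \<le> d}"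
proof -
  have step_p: "H (Suc p) j = H p j + move_vec (l p) j"
    using lift sp by (simp add: lifted_walk_SucD)
  have "(\<exists>t'\<le>d. H' t j = H t' j) \<and> (\<exists>t'\<le>d. H t j = H' t' j)" if "t \<le> d" for t
  proof (cases "s < t \<and> t \<le> p")
    case moved: True
    show ?thesis
    proof (cases "move_vec (l p) j = 0")
      case True
      then have "H' t j = H (t - 1) j" "H t j = H' (Suc t) j \<or> t = p"
        using moved by (auto simp: H'_def)
      moreover have "H p j = H' (Suc p) j" using True step_p sp by (simp add: H'_def)
      moreover have "t - 1 \<le> d" "Suc t \<le> d" "Suc p \<le> d" using that moved sp by auto
      ultimately show ?thesis by blast
    next
      case False
      have const: "H q j = H s j" if q: "s \<le> q" "q \<le> p" for q
      proof (rule lifted_walk_coord_const[OF lift q(1)])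
        show "q \<le> d" using q sp by simp
        show "move_vec (l q') j = 0" if "s \<le> q'" "q' < q" for q'
          using commute[of q'] False that q by simp
      qed
      have "H' t j = H (t - 1) j + move_vec (l p) j" "H' s j = H s j"
        using moved by (simp_all add: H'_def)
      moreover have "H (t - 1) j = H s j" "H p j = H s j" "H t j = H s j"
        using moved sp by (auto intro!: const)
      ultimately have "H' t j = H (Suc p) j" "H t j = H' s j"
        using step_p by simp_all
      moreover have "Suc p \<le> d" "s \<le> d" using sp by auto
      ultimately show ?thesis by blast
    qed
  next
    case False
    then have "H' t j = H t j" unfolding H'_def by presburger
    with that show ?thesis by (intro conjI exI[of _ t]) simp_all
  qed
  then show ?thesis by blast
qed

lemma obtain_run:
  fixes f :: "nat \<Rightarrow> 'a"
  assumes "f 0 \<noteq> c" "f d \<noteq> c" "t1 \<le> d" "f t1 = c"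
  obtains s e where "s < e" "e < d" "f s \<noteq> c" "\<And>t. s < t \<Longrightarrow> t \<le> e \<Longrightarrow> f t = c"
    "f (Suc e) \<noteq> c"
proof -
  define t0 where "t0 = (LEAST t. f t = c)"
  have t0: "f t0 = c" "t0 \<le> t1"
    using assms(4) unfolding t0_def by (auto intro: LeastI Least_le)
  then have "t0 \<noteq> 0" "t0 < d" using assms by (metis, metis le_less le_trans)
  define s where "s = t0 - 1"
  have s: "t0 = Suc s" "f s \<noteq> c"
    using \<open>t0 \<noteq> 0\<close> not_less_Least[of s "\<lambda>t. f t = c"] by (auto simp: s_def t0_def)
  define e where "e = (LEAST q. t0 \<le> q \<and> f (Suc q) \<noteq> c)"
  have exit: "t0 \<le> d - 1 \<and> f (Suc (d - 1)) \<noteq> c"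
    using \<open>t0 < d\<close> assms(2) by simp
  have e: "t0 \<le> e" "f (Suc e) \<noteq> c" "e \<le> d - 1"
    using LeastI[of "\<lambda>q. t0 \<le> q \<and> f (Suc q) \<noteq> c", OF exit]
      Least_le[of "\<lambda>q. t0 \<le> q \<and> f (Suc q) \<noteq> c", OF exit]
    by (simp_all add: e_def)
  have "f t = c" if "t0 \<le> t" "t \<le> e" for t
    using that
  proof (induction rule: dec_induct)
    case (step q)
    then show ?case using not_less_Least[of q "\<lambda>q. t0 \<le> q \<and> f (Suc q) \<noteq> c"] by (auto simp: e_def)
  qed (rule t0(1))
  moreover have "s < e" "e < d" using s e \<open>t0 < d\<close> by auto
  ultimately show ?thesis using that s e by (simp add: Suc_le_eq)
qed

lemma obtain_commuting_move:
  fixes l :: "nat \<Rightarrow> nat \<times> int" and s e i :: nat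
  assumes valid: "\<And>q. q \<le> e \<Longrightarrow> valid_move m (l q)" and "s < e"
    and touch_s: "move_vec (l s) i \<noteq> 0" and touch_e: "move_vec (l e) i \<noteq> 0"
    and edges: "fst (l s) \<noteq> fst (l e)"
    and between: "\<And>q. s < q \<Longrightarrow> q < e \<Longrightarrow> move_vec (l q) i = 0"
  obtains p where "s < p" "p \<le> e"
    "\<And>q j. s \<le> q \<Longrightarrow> q < p \<Longrightarrow> j \<noteq> i \<Longrightarrow> move_vec (l q) j = 0 \<or> move_vec (l p) j = 0"
proof -
  have touches: "move_vec (l q) j \<noteq> 0 \<longleftrightarrow> j = fst (l q) \<or> j = Suc (fst (l q))" if "q \<le> e" for q j
    using move_vec_eq_0_iff[OF valid[OF that]] by blast
  \<comment> \<open>far marks the side of i across the edge of move e. Moves s, ..., p - 1 touch no far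
    coordinate and move p touches no near one except i, so they commute away from i.\<close>
  define far where "far j \<longleftrightarrow> (if fst (l e) = i then i < j else j < i)" for j
  define P where "P q \<longleftrightarrow> q = e \<or> far (fst (l q)) \<and> far (Suc (fst (l q)))" for q
  define p where "p = (LEAST q. s < q \<and> P q)"
  have "s < e \<and> P e" using \<open>s < e\<close> by (simp add: P_def)
  then have p: "s < p" "P p" "p \<le> e"
    using LeastI[of "\<lambda>q. s < q \<and> P q" e] Least_le[of "\<lambda>q. s < q \<and> P q" e] by (simp_all add: p_def)
  have i_s: "i = fst (l s) \<or> i = Suc (fst (l s))" and i_e: "i = fst (l e) \<or> i = Suc (fst (l e))"
    using touches[of s i] touches[of e i] touch_s touch_e \<open>s < e\<close> by auto
  have near: "\<not> far j" if "s \<le> q" "q < p" "j \<noteq> i" "move_vec (l q) j \<noteq> 0" for q j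
  proof (cases "q = s")
    case True
    then have "j = fst (l s) \<or> j = Suc (fst (l s))"
      using that touches[of s j] \<open>s < e\<close> by simp
    then show ?thesis
      using i_s i_e edges \<open>j \<noteq> i\<close> unfolding far_def by presburger
  next
    case False
    then have "\<not> P q" "move_vec (l q) i = 0"
      using that p not_less_Least[of q "\<lambda>q. s < q \<and> P q"] between[of q] by (auto simp: p_def)
    then show ?thesis
      using that touches[of q j] touches[of q i] p by (auto simp: far_def P_def split: if_splits)
  qed
  have far_p: "far j" if "j \<noteq> i" "move_vec (l p) j \<noteq> 0" for j
    using p that touches[of p j] i_e by (auto simp: P_def far_def)
  show ?thesis
    using that[OF p(1,3)] near far_p by blast
qed

locale geodesic_lift =
  fixes n m :: nat and x :: "nat \<Rightarrow> int list" and d :: nat and z w :: "int list"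
    and H :: "nat \<Rightarrow> nat \<Rightarrow> int" and l :: "nat \<Rightarrow> nat \<times> int"
  assumes n_pos: "n \<ge> 1"
    and geodesic: "dyoke_geodesic n m x d z w"
    and lift: "lifted_walk m H l d"
    and x_eq: "\<And>t. t \<le> d \<Longrightarrow> x t = dyoke_of n m (H t)"
begin

lemma nth_x_middle: "t \<le> d \<Longrightarrow> 1 \<le> j \<Longrightarrow> j \<le> m \<Longrightarrow> x t ! j = H t j"
  by (simp add: x_eq nth_dyoke_of_middle)

lemma in_range: "lift_in_range m H d"
  using geodesic by (auto simp: lift_in_range_def dyoke_geodesic_def dyoke_walk_def dyoke_vert_def
      nth_x_middle[symmetric])

lemma walk_of_lift:
  assumes "lifted_walk m H' l' d'" "lift_in_range m H' d'" "H' 0 = H 0" "H' d' = H d"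
  shows "dyoke_walk n m (\<lambda>t. dyoke_of n m (H' t)) d'"
    and "dyoke_of n m (H' 0) = z" "dyoke_of n m (H' d') = w"
proof -
  have "dyoke_vert n m (x 0)" using geodesic unfolding dyoke_geodesic_def dyoke_walk_def by blast
  then have "(\<Sum>j<m+2. H 0 j) mod int n = 0" using n_pos by (simp add: x_eq dyoke_vert_dyoke_of_iff)
  then show "dyoke_walk n m (\<lambda>t. dyoke_of n m (H' t)) d'"
    using dyoke_walk_of_lift[OF n_pos assms(1,2)] assms(3) by simp
  show "dyoke_of n m (H' 0) = z" "dyoke_of n m (H' d') = w"
    using geodesic assms(3,4) x_eq[of 0] x_eq[of d] by (simp_all add: dyoke_geodesic_def)
qed

lemma lift_length_minimal:
  assumes "lifted_walk m H' l' d'" "lift_in_range m H' d'" "H' 0 = H 0" "H' d' = H d"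
  shows "d \<le> d'"
  using geodesic walk_of_lift[OF assms] by (simp add: dyoke_geodesic_def)

lemma geodesic_of_lift:
  assumes "lifted_walk m H' l' d" "lift_in_range m H' d" "H' 0 = H 0" "H' d = H d"
  shows "dyoke_geodesic n m (\<lambda>t. dyoke_of n m (H' t)) d z w"
  using geodesic walk_of_lift[OF assms] by (simp add: dyoke_geodesic_def)

lemma same_edge_same_sign:
  assumes "a < b" "b < d" "fst (l a) = fst (l b)"
  shows "snd (l a) = snd (l b)"
  using assms
proof (induction "b - a" arbitrary: a b rule: less_induct)
  case less
  show ?case
  proof (rule ccontr)
    \<comment> \<open>Cancelling the two opposite moves of a closest pair would shorten the geodesic.\<close>
    assume sign: "snd (l a) \<noteq> snd (l b)"
    have "valid_move m (l a)" "valid_move m (l b)"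
      using lift less.prems by (simp_all add: lifted_walk_def)
    then have opposite: "move_vec (l b) j = - move_vec (l a) j" for j
      using sign less.prems(3) by (auto simp: valid_move_def move_vec_def)
    have consistent: "snd (l q) = snd (l q')"
      if "a \<le> q" "q < q'" "q' \<le> b" "b - a \<noteq> q' - q" "fst (l q) = fst (l q')" for q q'
      using less.hyps[of q' q] that less.prems by simp
    have avoid: "fst (l q) \<noteq> fst (l a)" if "a < q" "q < b" for q
      using consistent[of a q] consistent[of q b] that sign less.prems(3) by force
    define H' where "H' t = (if t < a then H t
      else if t < b then (\<lambda>j. H (Suc t) j - move_vec (l a) j) else H (t + 2))" for t
    define l' where "l' t = (if t < a then l t else if Suc t < b then l (Suc t) else l (t + 2))" for t
    note cancel = lifted_walk_cancel_pair[OF lift less.prems(1,2) opposite, folded H'_def l'_def]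
    have "lift_in_range m H' (d - 2)"
      unfolding lift_in_range_def
    proof (intro allI impI)
      fix t j assume "t \<le> d - 2" and j: "1 \<le> j \<and> j \<le> m"
      then have "t + 2 \<le> d" using less.prems by linarith
      consider "t < a" | "a \<le> t" "t < b" | "b \<le> t" by linarith
      then show "H' t j \<in> {-1, 0, 1}"
      proof cases
        case 2
        then show ?thesis
          using lifted_walk_shift_in_range[OF lift in_range _ _ less.prems(2) opposite avoid] consistent j
          by (simp add: H'_def)
      qed (use in_range j \<open>t + 2 \<le> d\<close> less.prems in \<open>auto simp: H'_def lift_in_range_def\<close>)
    qed
    then have "d \<le> d - 2" using lift_length_minimal cancel by blast
    then show False using less.prems by linarith
  qed
qed

lemma obtain_excursion:
  assumes i: "1 \<le> i" "i \<le> m" and ends: "H 0 i = 0" "H d i = 0"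
    and c: "c = 1 \<or> c = -1" and hit: "t1 \<le> d" "H t1 i = c"
  obtains s e where "s < e" "e < d" "H s i = 0" "\<And>t. s < t \<Longrightarrow> t \<le> e \<Longrightarrow> H t i = c"
    "move_vec (l s) i = c" "move_vec (l e) i = - c"
    "\<And>q. s < q \<Longrightarrow> q < e \<Longrightarrow> move_vec (l q) i = 0" "fst (l s) \<noteq> fst (l e)"
proof -
  note valid = lifted_walkD(1)[OF lift] and step = lifted_walkD(2)[OF lift]
  have range_i: "H q i \<in> {-1, 0, 1}" if "q \<le> d" for q
    using lift_in_rangeD[OF in_range that i] .
  obtain s e where se: "s < e" "e < d" and H_s: "H s i \<noteq> c"
    and run: "\<And>t. s < t \<Longrightarrow> t \<le> e \<Longrightarrow> H t i = c" and exit: "H (Suc e) i \<noteq> c"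
    by (rule obtain_run[of "\<lambda>t. H t i" c d t1]) (use ends hit c in auto)
  have H_s0: "H s i = 0" and mv_s: "move_vec (l s) i = c"
    using step[of s] run[of "Suc s"] H_s range_i[of s] move_vec_range[of m "l s" i] valid[of s] c se
    by auto
  have mv_e: "move_vec (l e) i = - c"
    using step[of e] run[of e] exit range_i[of "Suc e"] move_vec_range[of m "l e" i] valid[of e] c se
    by auto
  have between: "move_vec (l q) i = 0" if "s < q" "q < e" for q
    using step[of q] run[of q] run[of "Suc q"] that se by auto
  have edges: "fst (l s) \<noteq> fst (l e)"
  proof
    assume "fst (l s) = fst (l e)"
    then have "l s = l e" using same_edge_same_sign[of s e] se by (simp add: prod_eq_iff)
    then show False using mv_s mv_e c by auto
  qed
  show ?thesis by (rule that[OF se H_s0 run mv_s mv_e between edges])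
qed

lemma obtain_lift_fewer_visits:
  assumes i: "1 \<le> i" "i \<le> m" and ends: "H 0 i = 0" "H d i = 0"
    and c: "c = 1 \<or> c = -1" and hit: "t1 \<le> d" "H t1 i = c"
  obtains H' l' where "lifted_walk m H' l' d" "lift_in_range m H' d" "H' 0 = H 0" "H' d = H d"
    "\<And>j. j \<noteq> i \<Longrightarrow> {H' t j | t. t \<le> d} = {H t j | t. t \<le> d}"
    "{t. t \<le> d \<and> H' t i = c} \<subset> {t. t \<le> d \<and> H t i = c}"
proof -
  obtain s e where se: "s < e" "e < d" and H_s0: "H s i = 0"
    and run: "\<And>t. s < t \<Longrightarrow> t \<le> e \<Longrightarrow> H t i = c"
    and mv_s: "move_vec (l s) i = c" and mv_e: "move_vec (l e) i = - c"
    and between: "\<And>q. s < q \<Longrightarrow> q < e \<Longrightarrow> move_vec (l q) i = 0"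
    and edges: "fst (l s) \<noteq> fst (l e)"
    using obtain_excursion[OF assms] by blast
  have range_i: "H q i \<in> {-1, 0, 1}" if "q \<le> d" for q
    using lift_in_rangeD[OF in_range that i] .
  note valid = lifted_walkD(1)[OF lift]
  obtain p where p: "s < p" "p \<le> e" and commute:
    "\<And>q j. s \<le> q \<Longrightarrow> q < p \<Longrightarrow> j \<noteq> i \<Longrightarrow> move_vec (l q) j = 0 \<or> move_vec (l p) j = 0"
    by (rule obtain_commuting_move[of e m l s i]) (use valid se mv_s mv_e c edges between in auto)
  have pd: "p < d" using p se by simp
  have mv_p: "move_vec (l p) i = 0 \<or> move_vec (l p) i = - c"
    using between[of p] mv_e p by (cases "p = e") auto
  define H' where "H' t = (if s < t \<and> t \<le> p then (\<lambda>j. H (t - 1) j + move_vec (l p) j) else H t)" for t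
  define l' where "l' t = (if t = s then l p else if s < t \<and> t \<le> p then l (t - 1) else l t)" for t
  note moved = lifted_walk_move_earlier[OF lift p(1) pd, folded H'_def l'_def]
  have same_values: "{H' t j | t. t \<le> d} = {H t j | t. t \<le> d}" if "j \<noteq> i" for j
    using lifted_walk_move_earlier_values[OF lift p(1) pd, folded H'_def] commute that by blast
  have range': "lift_in_range m H' d"
    unfolding lift_in_range_def
  proof (intro allI impI)
    fix t j assume t: "t \<le> d" and j: "1 \<le> j \<and> j \<le> m"
    show "H' t j \<in> {-1, 0, 1}"
    proof (cases "j = i")
      case False
      then obtain t' where "t' \<le> d" "H' t j = H t' j" using same_values[OF False] t by blast
      then show ?thesis using lift_in_rangeD[OF in_range] j by simp
    next
      case True
      have "H (t - 1) i + move_vec (l p) i \<in> {-1, 0, 1}" if "s < t" "t \<le> p"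
        using mv_p
      proof
        assume "move_vec (l p) i = - c"
        then show ?thesis
          using run[of "t - 1"] H_s0 c that p by (cases "t - 1 = s") auto
      qed (use range_i[of "t - 1"] t in simp)
      then show ?thesis using True range_i[OF t] by (simp add: H'_def)
    qed
  qed
  have fewer: "{t. t \<le> d \<and> H' t i = c} \<subset> {t. t \<le> d \<and> H t i = c}"
  proof
    show "{t. t \<le> d \<and> H' t i = c} \<subseteq> {t. t \<le> d \<and> H t i = c}"
      using run p by (auto simp: H'_def)
    have "H' (Suc s) i \<noteq> c" "H (Suc s) i = c"
      using mv_p H_s0 c run[of "Suc s"] p by (auto simp: H'_def)
    moreover have "Suc s \<le> d" using se by simp
    ultimately show "{t. t \<le> d \<and> H' t i = c} \<noteq> {t. t \<le> d \<and> H t i = c}"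
      by blast
  qed
  show ?thesis by (rule that[OF moved(1) range' moved(2,3) same_values fewer])
qed

lemma obtain_geodesic_fewer_visits:
  assumes i: "1 \<le> i" "i \<le> m" and ends: "z ! i = 0" "w ! i = 0"
    and c: "c = 1 \<or> c = -1" and hit: "t1 \<le> d" "x t1 ! i = c"
  obtains y where "dyoke_geodesic n m y d z w"
    "card {t. t \<le> d \<and> y t ! i = c} < card {t. t \<le> d \<and> x t ! i = c}"
    "\<And>j. j \<le> m + 1 \<Longrightarrow> j \<noteq> i \<Longrightarrow> {y t ! j | t. t \<le> d} = {x t ! j | t. t \<le> d}"
proof -
  have "x 0 = z" "x d = w" using geodesic by (simp_all add: dyoke_geodesic_def)
  then have "H 0 i = 0" "H d i = 0" "H t1 i = c"
    using ends hit nth_x_middle i by (metis le0 order_refl)+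
  then obtain H' l' where lift': "lifted_walk m H' l' d" "lift_in_range m H' d" "H' 0 = H 0" "H' d = H d"
    and same_values: "\<And>j. j \<noteq> i \<Longrightarrow> {H' t j | t. t \<le> d} = {H t j | t. t \<le> d}"
    and fewer: "{t. t \<le> d \<and> H' t i = c} \<subset> {t. t \<le> d \<and> H t i = c}"
    using obtain_lift_fewer_visits[OF i _ _ c hit(1)] by blast
  define y where "y t = dyoke_of n m (H' t)" for t
  have "card {t. t \<le> d \<and> y t ! i = c} < card {t. t \<le> d \<and> x t ! i = c}"
  proof -
    have "{t. t \<le> d \<and> y t ! i = c} = {t. t \<le> d \<and> H' t i = c}"
      "{t. t \<le> d \<and> x t ! i = c} = {t. t \<le> d \<and> H t i = c}"
      using i nth_x_middle by (auto simp: y_def nth_dyoke_of_middle)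
    then show ?thesis using fewer by (simp add: psubset_card_mono)
  qed
  moreover have "{y t ! j | t. t \<le> d} = {x t ! j | t. t \<le> d}" if "j \<le> m + 1" "j \<noteq> i" for j
  proof -
    have "{x t ! j | t. t \<le> d} = {dyoke_of n m (H t) ! j | t. t \<le> d}"
      using x_eq by (auto; metis)
    then show ?thesis
      using that same_values by (simp add: y_def nth_dyoke_of_values)
  qed
  ultimately show ?thesis
    using that geodesic_of_lift[OF lift'] unfolding y_def by blast
qed

end

lemma geodesic_avoiding_value:
  assumes n_pos: "n \<ge> 1" and i: "1 \<le> i" "i \<le> m" and z_i: "z ! i = 0" and c: "c = 1 \<or> c = -1"
  shows "dyoke_geodesic n m x d z (dyoke_zero m) \<Longrightarrow>
    \<exists>y. dyoke_geodesic n m y d z (dyoke_zero m) \<and> (\<forall>t\<le>d. y t ! i \<noteq> c)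
      \<and> (\<forall>j\<le>m+1. j \<noteq> i \<longrightarrow> {y t ! j | t. t \<le> d} = {x t ! j | t. t \<le> d})"
proof (induction "card {t. t \<le> d \<and> x t ! i = c}" arbitrary: x rule: less_induct)
  case less
  show ?case
  proof (cases "\<exists>t\<le>d. x t ! i = c")
    case True
    then obtain t1 where hit: "t1 \<le> d" "x t1 ! i = c" by blast
    obtain H l where "lifted_walk m H l d" "\<And>t. t \<le> d \<Longrightarrow> x t = dyoke_of n m (H t)"
      by (rule lift_of_dyoke_walk[of n m x d]) (use less.prems in \<open>auto simp: dyoke_geodesic_def\<close>)
    then interpret geodesic_lift n m x d z "dyoke_zero m" H l
      using n_pos less.prems by unfold_locales
    have "dyoke_zero m ! i = 0" using i by (simp add: dyoke_zero_def del: replicate.simps)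
    then obtain y where y: "dyoke_geodesic n m y d z (dyoke_zero m)"
      "card {t. t \<le> d \<and> y t ! i = c} < card {t. t \<le> d \<and> x t ! i = c}"
      "\<And>j. j \<le> m + 1 \<Longrightarrow> j \<noteq> i \<Longrightarrow> {y t ! j | t. t \<le> d} = {x t ! j | t. t \<le> d}"
      using obtain_geodesic_fewer_visits[OF i z_i _ c hit] by blast
    then show ?thesis using less.hyps[OF y(2) y(1)] by auto
  qed (use less.prems in blast)
qed

theorem lemma4p3:
  fixes n m i d :: nat and z :: "int list" and x :: "nat \<Rightarrow> int list"
  assumes "n \<ge> 1"
    and "dyoke_vert n m z"
    and "1 \<le> i" and "i \<le> m" and "z ! i = 0"
    and "dyoke_geodesic n m x d z (dyoke_zero m)"
  shows "(\<exists>y. dyoke_geodesic n m y d z (dyoke_zero m)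
            \<and> (\<forall>t\<le>d. y t ! i \<le> 0)
            \<and> (\<forall>j\<le>m+1. j \<noteq> i \<longrightarrow> {y t ! j | t. t \<le> d} = {x t ! j | t. t \<le> d}))
       \<and> (\<exists>y. dyoke_geodesic n m y d z (dyoke_zero m)
            \<and> (\<forall>t\<le>d. y t ! i \<ge> 0)
            \<and> (\<forall>j\<le>m+1. j \<noteq> i \<longrightarrow> {y t ! j | t. t \<le> d} = {x t ! j | t. t \<le> d}))"
proof -
  have middle: "y t ! i \<in> {-1, 0, 1}" if "dyoke_geodesic n m y d z (dyoke_zero m)" "t \<le> d" for y t
    using that assms(3,4) by (auto simp: dyoke_geodesic_def dyoke_walk_def dyoke_vert_def)
  obtain y1 where y1: "dyoke_geodesic n m y1 d z (dyoke_zero m)" "\<forall>t\<le>d. y1 t ! i \<noteq> 1"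
      "\<forall>j\<le>m+1. j \<noteq> i \<longrightarrow> {y1 t ! j | t. t \<le> d} = {x t ! j | t. t \<le> d}"
    using geodesic_avoiding_value[OF assms(1,3,4,5) _ assms(6)] by blast
  obtain y2 where y2: "dyoke_geodesic n m y2 d z (dyoke_zero m)" "\<forall>t\<le>d. y2 t ! i \<noteq> -1"
      "\<forall>j\<le>m+1. j \<noteq> i \<longrightarrow> {y2 t ! j | t. t \<le> d} = {x t ! j | t. t \<le> d}"
    using geodesic_avoiding_value[OF assms(1,3,4,5) _ assms(6)] by blast
  have "\<forall>t\<le>d. y1 t ! i \<le> 0" "\<forall>t\<le>d. y2 t ! i \<ge> 0"
    using middle[OF y1(1)] middle[OF y2(1)] y1(2) y2(2) by fastforce+
  then show ?thesis using y1 y2 by blast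
qed

end
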